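(* Let $n, d, p, q$ be positive integers. Let $\tilde{A} \in \mathbb{R}^{n \times n}$ be a normalized adjacency matrix of a graph on $n$ nodes, let $P \in \mathbb{R}^{n \times n}$, $X \in \mathbb{R}^{n \times p}$, $W_x \in \mathbb{R}^{p \times d}$ be arbitrary matrices, and let $W_z \in \mathbb{R}^{d \times d}$ satisfy $\|W_z\|_F^2 < 1/n$, where $\|\cdot\|_F$ is the Frobenius norm. Let $\sigma$ be either the row-wise Softmax or the element-wise Sigmoid function, and define the one-hop convolutional map $f : \mathbb{R}^{n \times d} \to \mathbb{R}^{n \times d}$ by $$f(Z) = \sigma(\tilde{A} Z W_z + P X W_x).$$ Then the implicit GNN with backbone $f$ is well-posed: the equation $Z = f(Z)$ has a unique solution $Z^* \in \mathbb{R}^{n\times d}$, and for every starting point $Z_0 \in \mathbb{R}^{n \times d}$ the iteration $Z_{k+1} = f(Z_k)$ converges to $Z^*$.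
   Context: An implicit graph neural network (IGNN) with backbone $f$ outputs node representations $Z$ defined as a solution of the equilibrium equation $Z = f(Z)$; it is called well-posed if this equation has an existing and unique solution to which forward iteration $Z_{k+1} = f(Z_k)$ converges from an arbitrary start point. The normalized adjacency matrix is $\tilde{A} = D^{-1/2}(A + I)D^{-1/2}$, where $A$ is the (symmetric, 0-1) adjacency matrix of the graph, $I$ is the identity, and $D$ is the diagonal degree matrix of $A + I$; in particular all entries of $\tilde A$ lie in $[0,1]$. The special case $P = \tilde{A}$ is a one-layer GCN backbone and $P = I$ is the IGNN* backbone. *)

theory Defs
  imports "HOL-Analysis.Analysis"
begin

text \<open>Matrices are Cartesian-product types: an n x m real matrix is real^'m^'n,
  rows indexed by 'n, columns by 'm. Matrix product is **.\<close>

definition is_adjacency :: "real^'n^'n \<Rightarrow> bool" where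
  "is_adjacency A \<longleftrightarrow> (\<forall>i j. A$i$j = A$j$i) \<and> (\<forall>i j. A$i$j = 0 \<or> A$i$j = 1)"

definition degree_mat :: "real^'n^'n \<Rightarrow> real^'n^'n" where
  "degree_mat A = (\<chi> i j. if i = j then (\<Sum>k\<in>UNIV. (A + mat 1)$i$k) else 0)"

definition inv_sqrt_diag :: "real^'n^'n \<Rightarrow> real^'n^'n" where
  "inv_sqrt_diag D = (\<chi> i j. if i = j then 1 / sqrt (D$i$i) else 0)"

definition norm_adj :: "real^'n^'n \<Rightarrow> real^'n^'n" where
  "norm_adj A = inv_sqrt_diag (degree_mat A) ** (A + mat 1) ** inv_sqrt_diag (degree_mat A)"

definition frob_norm :: "real^'m^'n \<Rightarrow> real" where
  "frob_norm M = sqrt (\<Sum>i\<in>UNIV. \<Sum>j\<in>UNIV. (M$i$j)^2)"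

definition row_softmax :: "real^'m^'n \<Rightarrow> real^'m^'n" where
  "row_softmax M = (\<chi> i j. exp (M$i$j) / (\<Sum>k\<in>UNIV. exp (M$i$k)))"

definition sigmoid_mat :: "real^'m^'n \<Rightarrow> real^'m^'n" where
  "sigmoid_mat M = (\<chi> i j. 1 / (1 + exp (- (M$i$j))))"

definition well_posed :: "('a::topological_space \<Rightarrow> 'a) \<Rightarrow> bool" where
  "well_posed f \<longleftrightarrow> (\<exists>!Z. Z = f Z) \<and>
     (\<forall>Z0. (\<lambda>k. (f ^^ k) Z0) \<longlonglongrightarrow> (THE Z. Z = f Z))"

end

theory Submission
  imports Defs
begin

text \<open>Both activations are 1-Lipschitz for the Frobenius norm: the sigmoid has slope at most 1/4,
  and along a segment the softmax s of a row moves with velocity s * (h - (s \<bullet> h)), which is never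
  longer than h because s is a probability vector. Since the Frobenius norm is submultiplicative, the
  backbone is Lipschitz with constant |norm_adj A|_F |W_z|_F. Each squared entry of norm_adj A is at most
  (A + I)_ij / d_i, and these bounds have row sums 1, so |norm_adj A|_F^2 \<le> n and the hypothesis on
  W_z makes the backbone a contraction. Banach's fixed point theorem concludes.\<close>

lemma dist_funpow_fixpoint_le:
  assumes "c-lipschitz_on UNIV f" and "f z = z"
  shows "dist ((f ^^ k) x) z \<le> c ^ k * dist x z"
proof (induction k)
  case 0
  show ?case by simp
next
  case (Suc k)
  have "dist ((f ^^ Suc k) x) z = dist (f ((f ^^ k) x)) (f z)"
    using assms(2) by simp
  also have "\<dots> \<le> c * dist ((f ^^ k) x) z"
    using assms(1) by (rule lipschitz_onD) simp_all
  also have "\<dots> \<le> c * (c ^ k * dist x z)"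
    using Suc.IH lipschitz_on_nonneg[OF assms(1)] by (rule mult_left_mono)
  finally show ?case by (simp add: mult_ac)
qed

lemma contraction_imp_well_posed:
  fixes f :: "'a::complete_space \<Rightarrow> 'a"
  assumes lip: "c-lipschitz_on UNIV f" and "c < 1"
  shows "well_posed f"
proof -
  have "0 \<le> c" using lip by (rule lipschitz_on_nonneg)
  have "\<exists>!z. f z = z"
    using \<open>0 \<le> c\<close> \<open>c < 1\<close> by (rule banach_fix_type) (use lip in \<open>simp add: lipschitz_onD\<close>)
  then have unique: "\<exists>!z. z = f z" by metis
  define z where "z = (THE z. z = f z)"
  have "f z = z" unfolding z_def using theI'[OF unique] by simp
  have "(\<lambda>k. (f ^^ k) x) \<longlonglongrightarrow> z" for x
  proof (rule tendsto_dist_iff[THEN iffD2], rule Lim_null_comparison)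
    show "\<forall>\<^sub>F k in sequentially. norm (dist ((f ^^ k) x) z) \<le> c ^ k * dist x z"
      using dist_funpow_fixpoint_le[OF lip \<open>f z = z\<close>] by simp
    show "(\<lambda>k. c ^ k * dist x z) \<longlonglongrightarrow> 0"
      using \<open>0 \<le> c\<close> \<open>c < 1\<close> by (intro tendsto_mult_left_zero LIMSEQ_power_zero) simp
  qed
  with unique show ?thesis
    unfolding well_posed_def z_def by blast
qed

lemma norm_vec_sq: "(norm (v::real^'m))\<^sup>2 = (\<Sum>j\<in>UNIV. (v$j)\<^sup>2)"
  unfolding power2_norm_eq_inner by (simp add: inner_vec_def power2_eq_square)

lemma norm_matrix_sq: "(norm (M::real^'m^'n))\<^sup>2 = (\<Sum>i\<in>UNIV. \<Sum>j\<in>UNIV. (M$i$j)\<^sup>2)"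
  unfolding power2_norm_eq_inner by (simp add: inner_vec_def power2_eq_square)

lemma frob_norm_eq_norm: "frob_norm (M::real^'m^'n) = norm M"
  unfolding frob_norm_def norm_matrix_sq[symmetric] by simp

lemma norm_matrix_mult_le: "norm ((A::real^'m^'n) ** (B::real^'k^'m)) \<le> norm A * norm B"
proof -
  have "(A ** B)$i$j = A$i \<bullet> column j B" for i j
    by (simp add: matrix_matrix_mult_def inner_vec_def column_def)
  then have entry: "((A ** B)$i$j)\<^sup>2 \<le> (norm (A$i))\<^sup>2 * (norm (column j B))\<^sup>2" for i j
    by (metis Cauchy_Schwarz_ineq power2_norm_eq_inner)
  have "(norm (A ** B))\<^sup>2 \<le> (\<Sum>i\<in>UNIV. \<Sum>j\<in>UNIV. (norm (A$i))\<^sup>2 * (norm (column j B))\<^sup>2)"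
    unfolding norm_matrix_sq by (intro sum_mono entry)
  also have "\<dots> = (\<Sum>i\<in>UNIV. (norm (A$i))\<^sup>2) * (\<Sum>j\<in>UNIV. (norm (column j B))\<^sup>2)"
    by (simp add: sum_product)
  also have "(\<Sum>i\<in>UNIV. (norm (A$i))\<^sup>2) = (norm A)\<^sup>2"
    by (simp add: power2_norm_eq_inner inner_vec_def)
  also have "(\<Sum>j\<in>UNIV. (norm (column j B))\<^sup>2) = (norm B)\<^sup>2"
    unfolding norm_matrix_sq norm_vec_sq column_def by (simp, rule sum.swap)
  finally have "(norm (A ** B))\<^sup>2 \<le> (norm A * norm B)\<^sup>2"
    by (simp add: power_mult_distrib)
  then show ?thesis
    by (meson norm_ge_zero power2_le_imp_le mult_nonneg_nonneg)
qed

lemma matrix_diff_ldistrib: "(A::real^'m^'n) ** (B - C) = A ** B - A ** (C::real^'k^'m)"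
  by (simp add: matrix_matrix_mult_def vec_eq_iff sum_subtractf right_diff_distrib)

lemma matrix_diff_rdistrib: "((B::real^'m^'n) - C) ** (A::real^'k^'m) = B ** A - C ** A"
  by (simp add: matrix_matrix_mult_def vec_eq_iff sum_subtractf left_diff_distrib)

lemma lipschitz_on_matrix_affine:
  fixes M :: "real^'n^'m" and W :: "real^'l^'k" and B :: "real^'l^'m"
  shows "(norm M * norm W)-lipschitz_on U (\<lambda>Z. M ** Z ** W + B)"
proof (rule lipschitz_onI)
  fix Z1 Z2 :: "real^'k^'n"
  have "dist (M ** Z1 ** W + B) (M ** Z2 ** W + B) = norm (M ** (Z1 - Z2) ** W)"
    by (simp add: dist_norm matrix_diff_ldistrib matrix_diff_rdistrib)
  also have "\<dots> \<le> norm M * norm (Z1 - Z2) * norm W"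
    by (meson norm_matrix_mult_le norm_ge_zero mult_right_mono order_trans)
  finally show "dist (M ** Z1 ** W + B) (M ** Z2 ** W + B) \<le> norm M * norm W * dist Z1 Z2"
    by (simp add: dist_norm mult_ac)
qed simp

lemma norm_adj_nth:
  "norm_adj A $ i $ j = (A + mat 1)$i$j /
     (sqrt (\<Sum>k\<in>UNIV. (A + mat 1)$i$k) * sqrt (\<Sum>k\<in>UNIV. (A + mat 1)$j$k))"
  unfolding norm_adj_def inv_sqrt_diag_def degree_mat_def matrix_matrix_mult_def
  by (simp add: if_distrib[of "\<lambda>x. x * y" for y] if_distrib[of "\<lambda>x. y * x" for y]
      if_distrib[of "\<lambda>x. x / y" for y] sum.delta sum.delta' cong: if_cong)

lemma norm_norm_adj_sq_le:
  assumes adj: "is_adjacency (A::real^'n^'n)"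
  shows "(norm (norm_adj A))\<^sup>2 \<le> real CARD('n)"
proof -
  define B where "B = A + mat 1"
  define d where "d i = (\<Sum>k\<in>UNIV. B$i$k)" for i
  have B_nth: "B$i$j = A$i$j + (if i = j then 1 else 0)" for i j
    by (simp add: B_def mat_def)
  have A01: "A$i$j = 0 \<or> A$i$j = 1" and A_sym: "A$i$j = A$j$i" for i j
    using adj unfolding is_adjacency_def by auto
  have B_nonneg: "0 \<le> B$i$j" and B_sym: "B$i$j = B$j$i" for i j
    unfolding B_nth using A01[of i j] A_sym[of i j] by auto
  have B_le_d: "B$i$j \<le> d i" for i j
    unfolding d_def by (rule member_le_sum) (auto simp: B_nonneg)
  have d_pos: "0 < d i" for i
    using B_le_d[of i i] A01[of i i] unfolding B_nth by auto
  have entry: "(norm_adj A $i$j)\<^sup>2 \<le> B$i$j / d i" for i j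
  proof -
    have "(norm_adj A $i$j)\<^sup>2 = (B$i$j)\<^sup>2 / (d i * d j)"
      unfolding norm_adj_nth B_def[symmetric] d_def[symmetric] using d_pos[of i] d_pos[of j]
      by (simp add: power_divide power_mult_distrib)
    also have "\<dots> \<le> B$i$j * d j / (d i * d j)"
      unfolding power2_eq_square using B_le_d[of j i] B_sym[of i j] B_nonneg[of i j] d_pos[of i] d_pos[of j]
      by (intro divide_right_mono mult_left_mono) simp_all
    also have "\<dots> = B$i$j / d i"
      using d_pos[of j] by simp
    finally show ?thesis .
  qed
  have "(norm (norm_adj A))\<^sup>2 \<le> (\<Sum>i\<in>(UNIV::'n set). \<Sum>j\<in>UNIV. B$i$j / d i)"
    unfolding norm_matrix_sq by (intro sum_mono entry)
  also have "\<dots> = (\<Sum>i\<in>(UNIV::'n set). 1)"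
    using d_pos by (intro sum.cong refl) (simp add: less_imp_neq[symmetric] flip: sum_divide_distrib d_def)
  finally show ?thesis by simp
qed

lemma sigmoid_dist_le: "\<bar>1 / (1 + exp (- a)) - 1 / (1 + exp (- b))\<bar> \<le> \<bar>a - b :: real\<bar>"
proof -
  have "norm (1 / (1 + exp (- a)) - 1 / (1 + exp (- b))) \<le> 1 * norm (a - b)"
  proof (rule field_differentiable_bound[of UNIV])
    fix x :: real
    have "0 < 1 + exp (- x)" by (simp add: add_pos_pos)
    then show "((\<lambda>x. 1 / (1 + exp (- x))) has_field_derivative
                 exp (- x) / ((1 + exp (- x)) * (1 + exp (- x)))) (at x within UNIV)"
      by (auto intro!: derivative_eq_intros)
    have "exp (- x) \<le> (1 + exp (- x)) * (1 + exp (- x))"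
      by (simp add: algebra_simps)
    then show "norm (exp (- x) / ((1 + exp (- x)) * (1 + exp (- x)))) \<le> 1"
      by (simp add: divide_simps)
  qed simp_all
  then show ?thesis by simp
qed

lemma lipschitz_on_sigmoid_mat: "1-lipschitz_on U (sigmoid_mat :: real^'m^'n \<Rightarrow> real^'m^'n)"
proof (rule lipschitz_onI)
  fix M N :: "real^'m^'n"
  have "norm (sigmoid_mat M - sigmoid_mat N) \<le> norm (M - N)"
    by (intro norm_le_componentwise_cart) (simp add: sigmoid_mat_def sigmoid_dist_le)
  then show "dist (sigmoid_mat M) (sigmoid_mat N) \<le> 1 * dist M N"
    by (simp add: dist_norm)
qed simp

definition softmax_vec :: "real^'d \<Rightarrow> real^'d" where
  "softmax_vec v = (\<chi> j. exp (v$j) / (\<Sum>k\<in>UNIV. exp (v$k)))"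

lemma row_softmax_nth: "row_softmax M $ i = softmax_vec (M $ i)"
  by (simp add: row_softmax_def softmax_vec_def vec_eq_iff)

lemma softmax_vec_nonneg: "0 \<le> softmax_vec v $ j"
  by (simp add: softmax_vec_def sum_nonneg)

lemma sum_softmax_vec: "(\<Sum>j\<in>UNIV. softmax_vec v $ j) = 1"
proof -
  have "(\<Sum>k\<in>UNIV. exp (v$k)) \<noteq> 0"
    by (simp add: sum_pos less_imp_neq[symmetric])
  then show ?thesis
    by (simp add: softmax_vec_def flip: sum_divide_distrib)
qed

lemma softmax_vec_line_deriv:
  fixes x h :: "real^'d"
  shows "((\<lambda>t. softmax_vec (x + t *\<^sub>R h) $ j) has_real_derivative
           softmax_vec (x + t *\<^sub>R h) $ j * (h$j - (\<Sum>k\<in>UNIV. softmax_vec (x + t *\<^sub>R h) $ k * h$k)))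
         (at t)"
proof -
  define E where "E k = exp (x$k + t * h$k)" for k
  define S where "S = (\<Sum>k\<in>UNIV. E k)"
  have "S > 0" unfolding S_def E_def by (intro sum_pos) auto
  have "((\<lambda>t. exp (x$j + t * h$j) / (\<Sum>k\<in>UNIV. exp (x$k + t * h$k))) has_real_derivative
         (E j * h$j * S - E j * (\<Sum>k\<in>UNIV. E k * h$k)) / (S * S)) (at t)"
    unfolding E_def S_def using \<open>S > 0\<close>[unfolded S_def E_def]
    by (auto intro!: derivative_eq_intros simp: power2_eq_square)
  moreover have "(E j * h$j * S - E j * (\<Sum>k\<in>UNIV. E k * h$k)) / (S * S)
      = E j / S * (h$j - (\<Sum>k\<in>UNIV. E k / S * h$k))"
    using \<open>S > 0\<close> by (simp add: field_simps sum_divide_distrib[symmetric])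
  ultimately show ?thesis
    by (simp add: softmax_vec_def E_def S_def)
qed

text \<open>The softmax Jacobian diag s - s s^T has operator norm at most 1.\<close>

lemma norm_weighted_centering_le:
  fixes h :: "real^'d"
  assumes s_nonneg: "\<And>j. 0 \<le> s j" and sum_s: "(\<Sum>j\<in>UNIV. s j) = 1"
  shows "norm (\<chi> j. s j * (h$j - (\<Sum>k\<in>UNIV. s k * h$k))) \<le> norm h"
proof -
  define m where "m = (\<Sum>k\<in>UNIV. s k * h$k)"
  have s_le_1: "s j \<le> 1" for j
    using member_le_sum[of j UNIV s] s_nonneg sum_s by simp
  have "(norm (\<chi> j. s j * (h$j - m)))\<^sup>2 = (\<Sum>j\<in>UNIV. (s j)\<^sup>2 * (h$j - m)\<^sup>2)"
    unfolding norm_vec_sq by (simp add: power_mult_distrib)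
  also have "\<dots> \<le> (\<Sum>j\<in>UNIV. s j * (h$j - m)\<^sup>2)"
    using s_nonneg s_le_1
    by (intro sum_mono mult_right_mono) (simp_all add: power2_eq_square mult_left_le)
  also have "\<dots> = (\<Sum>j\<in>UNIV. s j * (h$j)\<^sup>2) - 2 * m * (\<Sum>j\<in>UNIV. s j * h$j)
                      + m\<^sup>2 * (\<Sum>j\<in>UNIV. s j)"
    by (simp add: power2_diff algebra_simps sum.distrib sum_subtractf sum_distrib_left
        sum_distrib_right)
  also have "\<dots> = (\<Sum>j\<in>UNIV. s j * (h$j)\<^sup>2) - m\<^sup>2"
    unfolding sum_s m_def[symmetric] by (simp add: power2_eq_square)
  also have "\<dots> \<le> (\<Sum>j\<in>UNIV. (h$j)\<^sup>2)"
    using s_nonneg s_le_1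
    by (smt (verit) mult_left_le_one_le sum_mono zero_le_power2)
  finally show ?thesis
    unfolding m_def norm_vec_sq[symmetric] by (meson norm_ge_zero power2_le_imp_le)
qed

text \<open>Mean value theorem for t \<mapsto> u \<bullet> softmax_vec (x + t (y - x)), with u the difference of
  the softmax values at the endpoints.\<close>

lemma softmax_vec_dist_le: "norm (softmax_vec y - softmax_vec x) \<le> norm (y - x)"
proof -
  define u where "u = softmax_vec y - softmax_vec x"
  define h where "h = y - x"
  define s where "s t = softmax_vec (x + t *\<^sub>R h)" for t
  define v where "v t = (\<chi> j. s t $ j * (h$j - (\<Sum>k\<in>UNIV. s t $ k * h$k)))" for t
  have deriv: "((\<lambda>t. u \<bullet> s t) has_real_derivative u \<bullet> v t) (at t)" for t
    unfolding inner_vec_def s_def v_def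
    by (auto intro!: DERIV_sum DERIV_cmult softmax_vec_line_deriv)
  have "\<exists>z>0. z < 1 \<and> u \<bullet> s 1 - u \<bullet> s 0 = (1 - 0) * (u \<bullet> v z)"
    by (rule MVT2) (use deriv in auto)
  then obtain z where "u \<bullet> s 1 - u \<bullet> s 0 = u \<bullet> v z"
    by auto
  then have "(norm u)\<^sup>2 = u \<bullet> v z"
    by (simp add: s_def h_def u_def power2_norm_eq_inner flip: inner_diff_right)
  also have "\<dots> \<le> norm u * norm (v z)"
    by (rule norm_cauchy_schwarz)
  also have "\<dots> \<le> norm u * norm h"
    unfolding v_def s_def
    by (intro mult_left_mono norm_weighted_centering_le softmax_vec_nonneg sum_softmax_vec) simp
  finally show ?thesis
    unfolding u_def h_def by (cases "u = 0") (auto simp: power2_eq_square u_def)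
qed

lemma lipschitz_on_row_softmax: "1-lipschitz_on U (row_softmax :: real^'m^'n \<Rightarrow> real^'m^'n)"
proof (rule lipschitz_onI)
  fix M N :: "real^'m^'n"
  have "norm (row_softmax M - row_softmax N) \<le> norm (M - N)"
    by (rule norm_le_componentwise_cart)
      (simp only: vector_minus_component row_softmax_nth softmax_vec_dist_le)
  then show "dist (row_softmax M) (row_softmax N) \<le> 1 * dist M N"
    by (simp add: dist_norm)
qed simp

theorem theorem1:
  fixes A P :: "real^'n^'n" and X :: "real^'p^'n"
    and W\<^sub>x :: "real^'d^'p" and W\<^sub>z :: "real^'d^'d"
    and \<sigma> :: "real^'d^'n \<Rightarrow> real^'d^'n"
  assumes "is_adjacency A"
    and "(frob_norm W\<^sub>z)^2 < 1 / real CARD('n)"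
    and "\<sigma> = row_softmax \<or> \<sigma> = sigmoid_mat"
  shows "well_posed (\<lambda>Z. \<sigma> (norm_adj A ** Z ** W\<^sub>z + P ** X ** W\<^sub>x))"
proof (rule contraction_imp_well_posed)
  let ?c = "norm (norm_adj A) * norm W\<^sub>z"
  have "1-lipschitz_on UNIV \<sigma>"
    using assms(3) lipschitz_on_row_softmax lipschitz_on_sigmoid_mat by blast
  then show "(1 * ?c)-lipschitz_on UNIV (\<lambda>Z. \<sigma> (norm_adj A ** Z ** W\<^sub>z + P ** X ** W\<^sub>x))"
    by (intro lipschitz_on_compose2 lipschitz_on_matrix_affine) (rule lipschitz_on_subset, auto)
  have "?c\<^sup>2 \<le> real CARD('n) * (norm W\<^sub>z)\<^sup>2"
    unfolding power_mult_distrib using norm_norm_adj_sq_le[OF assms(1)]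
    by (rule mult_right_mono) simp
  also have "\<dots> < 1"
    using assms(2) by (simp add: frob_norm_eq_norm field_simps)
  finally show "1 * ?c < 1"
    by (simp add: power_less_one_iff abs_square_less_1)
qed

end
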